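(* Let $G=(V,E)$ be a connected graph with $n$ vertices, $\tau$ a set of types with $|\tau|>1$, $f:\tau\to\mathbb{Q}_{\ge1}$ a fitness function, and $M_0\in\Omega_0(G,\tau)$. Suppose the types in $\tau$ have $k$ distinct fitnesses $f_1<f_2<\dots<f_k$. For $i\in\{1,\dots,k\}$ let $\ell_i=|f^{-1}(f_i)|$ and $\ell=\max_i\ell_i$. Then: (1) $\mathbb{E}(A(G,\tau,f,M_0))\le(\ell-1)n^6+\sum_{i=2}^k\frac{f_i}{f_i-f_{i-1}}(n+1)n^3$; (2) for every $j\in\{2,\dots,k\}$ and every type $\beta$ with $f(\beta)=f_j$, $\mathbb{E}(A_\beta(G,\tau,f,M_0))\le(\ell_j-1)n^6+\sum_{i=j}^k\frac{f_i}{f_i-f_{i-1}}(n+1)n^3$; (3) for every type $\beta$ with $f(\beta)=f_1$, $\mathbb{E}(A_\beta(G,\tau,f,M_0))\le(\ell_1-1)n^6+\sum_{i=2}^k\frac{f_i}{f_i-f_{i-1}}(n+1)n^3$.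
   Context: For $G=(V,E)$, $N(v)$ is the neighbourhood of $v$. For a state $S:V\to\tau$, $S|_{v\to w}$ equals $S$ except $w$ gets type $S(v)$. The Moran process $M(G,\tau,f,M_0)$: Markov chain on states from $M_0$; given $M_t$, choose $v$ with probability $f(M_t(v))/\sum_uf(M_t(u))$, then $w\in N(v)$ uniformly, set $M_{t+1}=M_t|_{v\to w}$. $V_j(t)=\{v:M_t(v)=j\}$. $\Omega_0(G,\tau)$ is the set of states $V\to\tau$ with range $\tau$. Absorption time of type $j$: $A_j(G,\tau,f,M_0)=\min\{t\in\mathbb{Z}_{\ge0}:V_j(t)=V\text{ or }V_j(t)=\emptyset\}$. Total absorption time: $A(G,\tau,f,M_0)=\min\{t\in\mathbb{Z}_{\ge0}: V_j(t)=V\text{ for some }j\in\tau\}$. *)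

theory Defs
  imports "HOL-Probability.Probability"
begin

definition simple_graph :: "'v set \<Rightarrow> ('v \<Rightarrow> 'v \<Rightarrow> bool) \<Rightarrow> bool" where
  "simple_graph V E \<longleftrightarrow> finite V \<and> (\<forall>u w. E u w \<longrightarrow> u \<in> V \<and> w \<in> V)
      \<and> (\<forall>u w. E u w \<longrightarrow> E w u) \<and> (\<forall>u. \<not> E u u)"

definition connected_graph :: "'v set \<Rightarrow> ('v \<Rightarrow> 'v \<Rightarrow> bool) \<Rightarrow> bool" where
  "connected_graph V E \<longleftrightarrow> simple_graph V E \<and> (\<forall>u\<in>V. \<forall>w\<in>V. E\<^sup>*\<^sup>* u w)"

definition nbhd :: "'v set \<Rightarrow> ('v \<Rightarrow> 'v \<Rightarrow> bool) \<Rightarrow> 'v \<Rightarrow> 'v set" where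
  "nbhd V E v = {w \<in> V. E v w}"

definition Omega0 :: "'v set \<Rightarrow> 't set \<Rightarrow> ('v \<Rightarrow> 't) set" where
  "Omega0 V \<tau> = {S. S ` V = \<tau>}"

definition moran_step :: "'v set \<Rightarrow> ('v \<Rightarrow> 'v \<Rightarrow> bool) \<Rightarrow> ('t \<Rightarrow> rat) \<Rightarrow> ('v \<Rightarrow> 't) \<Rightarrow> ('v \<Rightarrow> 't) pmf" where
  "moran_step V E f S =
     bind_pmf (embed_pmf (\<lambda>v. if v \<in> V then real_of_rat (f (S v)) / (\<Sum>u\<in>V. real_of_rat (f (S u))) else 0))
       (\<lambda>v. map_pmf (\<lambda>w. S(w := S v)) (pmf_of_set (nbhd V E v)))"

fun moran_traj :: "'v set \<Rightarrow> ('v \<Rightarrow> 'v \<Rightarrow> bool) \<Rightarrow> ('t \<Rightarrow> rat) \<Rightarrow> ('v \<Rightarrow> 't) \<Rightarrow> nat \<Rightarrow> ('v \<Rightarrow> 't) list pmf" where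
  "moran_traj V E f M0 0 = return_pmf [M0]"
| "moran_traj V E f M0 (Suc t) =
     bind_pmf (moran_traj V E f M0 t) (\<lambda>xs. map_pmf (\<lambda>s. xs @ [s]) (moran_step V E f (last xs)))"

text \<open>Expected value of the hitting time T = min {t. P (M_t)}, via E[T] = sum_t Pr[T > t]
  (value in ennreal; it is infinity if T is not a.s. finite with finite mean).\<close>
definition moran_exp_hit :: "'v set \<Rightarrow> ('v \<Rightarrow> 'v \<Rightarrow> bool) \<Rightarrow> ('t \<Rightarrow> rat) \<Rightarrow> ('v \<Rightarrow> 't)
     \<Rightarrow> (('v \<Rightarrow> 't) \<Rightarrow> bool) \<Rightarrow> ennreal" where
  "moran_exp_hit V E f M0 P =
     (\<Sum>t. ennreal (measure_pmf.prob (moran_traj V E f M0 t) {xs. \<forall>s\<in>set xs. \<not> P s}))"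

definition absorbed_type :: "'v set \<Rightarrow> 't \<Rightarrow> ('v \<Rightarrow> 't) \<Rightarrow> bool" where
  "absorbed_type V j S \<longleftrightarrow> (\<forall>v\<in>V. S v = j) \<or> (\<forall>v\<in>V. S v \<noteq> j)"

definition absorbed_total :: "'v set \<Rightarrow> 't set \<Rightarrow> ('v \<Rightarrow> 't) \<Rightarrow> bool" where
  "absorbed_total V \<tau> S \<longleftrightarrow> (\<exists>j\<in>\<tau>. \<forall>v\<in>V. S v = j)"

definition A_exp where "A_exp V E \<tau> f M0 = moran_exp_hit V E f M0 (absorbed_total V \<tau>)"
definition A_type_exp where "A_type_exp V E f M0 j = moran_exp_hit V E f M0 (absorbed_type V j)"

text \<open>Distinct fitness values f_1 < ... < f_k (1-indexed), k, and multiplicities l_i.\<close>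
definition nfit :: "('t \<Rightarrow> rat) \<Rightarrow> 't set \<Rightarrow> nat" where
  "nfit f \<tau> = card (f ` \<tau>)"

definition fitv :: "('t \<Rightarrow> rat) \<Rightarrow> 't set \<Rightarrow> nat \<Rightarrow> real" where
  "fitv f \<tau> i = real_of_rat (sorted_list_of_set (f ` \<tau>) ! (i - 1))"

definition fit_mult :: "('t \<Rightarrow> rat) \<Rightarrow> 't set \<Rightarrow> nat \<Rightarrow> nat" where
  "fit_mult f \<tau> i = card {x \<in> \<tau>. real_of_rat (f x) = fitv f \<tau> i}"

definition maxmult :: "('t \<Rightarrow> rat) \<Rightarrow> 't set \<Rightarrow> nat" where
  "maxmult f \<tau> = Max (fit_mult f \<tau> ` {1..nfit f \<tau>})"

definition fit_sum :: "('t \<Rightarrow> rat) \<Rightarrow> 't set \<Rightarrow> nat \<Rightarrow> nat \<Rightarrow> real" where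
  "fit_sum f \<tau> n j = (\<Sum>i = j..nfit f \<tau>.
      fitv f \<tau> i / (fitv f \<tau> i - fitv f \<tau> (i - 1)) * (real n + 1) * real n ^ 3)"

end

(*
  Additive drift: if a potential that is nonnegative on all reachable states drops by at least 1
  in expectation at every state that is not yet absorbed, then the expected absorption time is at
  most its initial value.

  The potentials are built from Psi_A(S), the sum of 1/deg x over the vertices x with S x in A.
  Averaging a Moran step over both orientations of each edge shows that the expected change of
  Psi_A is a sum of terms (f(S v) - f(S w)) times the change of A-membership along the edge vw. If A
  is the set of types of the highest fitness f_m present, all these terms are nonnegative, and one
  edge leaving A already gives drift at least (f_m - f_(m-1)) / (f_m n^3); so
  C_m (Psi_max - Psi_A) with C_m = f_m n^3 / (f_m - f_(m-1)) drifts down by 1. The highest fitness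
  present never increases, and when it drops the reserve C_i Psi_max of the lower levels pays for
  the next phase; in total Psi_max <= n gives the sum of f_i / (f_i - f_(i-1)) (n + 1) n^3.
  Once all vertices have equal fitness, every Psi_{t} is a martingale, so
  n^4 * (sum over types t of Psi_{t} (Psi_max - Psi_{t})) <= n^6 drops by the expected squared
  change, which is at least 1 because some edge joins two different types. Such a neutral,
  unabsorbed state needs two types of equal fitness, whence the term (l - 1) n^6.
*)
theory Submission
  imports Defs
begin

section \<open>Additive drift\<close>

fun markov_traj :: "('s \<Rightarrow> 's pmf) \<Rightarrow> 's \<Rightarrow> nat \<Rightarrow> 's list pmf" where
  "markov_traj K s0 0 = return_pmf [s0]"
| "markov_traj K s0 (Suc t) =
     bind_pmf (markov_traj K s0 t) (\<lambda>xs. map_pmf (\<lambda>s. xs @ [s]) (K (last xs)))"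

lemma moran_traj_eq_markov_traj: "moran_traj V E f M0 t = markov_traj (moran_step V E f) M0 t"
  by (induction t) auto

lemma markov_traj_support:
  assumes "s0 \<in> I" and "\<And>s. s \<in> I \<Longrightarrow> set_pmf (K s) \<subseteq> I \<and> finite (set_pmf (K s))"
  shows "finite (set_pmf (markov_traj K s0 t))
    \<and> (\<forall>xs\<in>set_pmf (markov_traj K s0 t). xs \<noteq> [] \<and> last xs \<in> I)"
  by (induction t) (use assms in \<open>fastforce simp: set_bind_pmf\<close>)+

lemma expectation_markov_traj_Suc:
  fixes g :: "'s list \<Rightarrow> real"
  assumes "finite (set_pmf (markov_traj K s0 t))"
    and "\<And>xs. xs \<in> set_pmf (markov_traj K s0 t) \<Longrightarrow> finite (set_pmf (K (last xs)))"
  shows "measure_pmf.expectation (markov_traj K s0 (Suc t)) g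
    = measure_pmf.expectation (markov_traj K s0 t)
        (\<lambda>xs. measure_pmf.expectation (K (last xs)) (\<lambda>s. g (xs @ [s])))"
proof -
  have "measure_pmf.expectation (markov_traj K s0 (Suc t)) g
      = (\<Sum>xs\<in>set_pmf (markov_traj K s0 t). pmf (markov_traj K s0 t) xs *\<^sub>R
          measure_pmf.expectation (map_pmf (\<lambda>s. xs @ [s]) (K (last xs))) g)"
    unfolding markov_traj.simps by (rule pmf_expectation_bind) (use assms in auto)
  also have "\<dots> = measure_pmf.expectation (markov_traj K s0 t)
      (\<lambda>xs. measure_pmf.expectation (K (last xs)) (\<lambda>s. g (xs @ [s])))"
    unfolding integral_map_pmf
    by (rule integral_measure_pmf[symmetric]) (use assms in auto)
  finally show ?thesis .
qed

definition survives :: "('s \<Rightarrow> bool) \<Rightarrow> 's list \<Rightarrow> bool" where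
  "survives P xs \<longleftrightarrow> (\<forall>s\<in>set xs. \<not> P s)"

lemma stopped_potential_one_step:
  fixes K :: "'s \<Rightarrow> 's pmf" and \<Phi> :: "'s \<Rightarrow> real"
  assumes closed: "\<And>s. s \<in> I \<Longrightarrow> set_pmf (K s) \<subseteq> I \<and> finite (set_pmf (K s))"
    and nonneg: "\<And>s. s \<in> I \<Longrightarrow> \<Phi> s \<ge> 0"
    and drift: "\<And>s. s \<in> I \<Longrightarrow> \<not> P s \<Longrightarrow> measure_pmf.expectation (K s) \<Phi> \<le> \<Phi> s - 1"
    and xs: "xs \<noteq> []" "last xs \<in> I"
  shows "measure_pmf.expectation (K (last xs)) (\<lambda>s. if survives P (xs @ [s]) then \<Phi> s else 0)
    \<le> (if survives P xs then \<Phi> (last xs) else 0) - (if survives P xs then 1 else 0)"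
proof (cases "survives P xs")
  case True
  have "measure_pmf.expectation (K (last xs)) (\<lambda>s. if survives P (xs @ [s]) then \<Phi> s else 0)
      \<le> measure_pmf.expectation (K (last xs)) \<Phi>"
    using closed[OF xs(2)] nonneg
    by (intro integral_mono_AE) (auto simp: integrable_measure_pmf_finite AE_measure_pmf_iff)
  also have "\<dots> \<le> \<Phi> (last xs) - 1"
    using True xs by (intro drift) (auto simp: survives_def)
  finally show ?thesis using True by simp
next
  case False
  then have "\<not> survives P (xs @ [s])" for s by (simp add: survives_def)
  then show ?thesis using False by simp
qed

lemma stopped_potential_step:
  fixes K :: "'s \<Rightarrow> 's pmf" and \<Phi> :: "'s \<Rightarrow> real"
  assumes s0: "s0 \<in> I"
    and closed: "\<And>s. s \<in> I \<Longrightarrow> set_pmf (K s) \<subseteq> I \<and> finite (set_pmf (K s))"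
    and nonneg: "\<And>s. s \<in> I \<Longrightarrow> \<Phi> s \<ge> 0"
    and drift: "\<And>s. s \<in> I \<Longrightarrow> \<not> P s \<Longrightarrow> measure_pmf.expectation (K s) \<Phi> \<le> \<Phi> s - 1"
  shows "measure_pmf.expectation (markov_traj K s0 (Suc t))
      (\<lambda>xs. if survives P xs then \<Phi> (last xs) else 0)
    \<le> measure_pmf.expectation (markov_traj K s0 t) (\<lambda>xs. if survives P xs then \<Phi> (last xs) else 0)
      - measure_pmf.prob (markov_traj K s0 t) {xs. survives P xs}"
proof -
  note supp = markov_traj_support[of s0 I K, OF s0 closed]
  have integrable: "integrable (measure_pmf (markov_traj K s0 t)) g" for g :: "_ \<Rightarrow> real"
    using supp by (simp add: integrable_measure_pmf_finite)
  have "measure_pmf.expectation (markov_traj K s0 (Suc t))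
      (\<lambda>xs. if survives P xs then \<Phi> (last xs) else 0)
      = measure_pmf.expectation (markov_traj K s0 t)
        (\<lambda>xs. measure_pmf.expectation (K (last xs)) (\<lambda>s. if survives P (xs @ [s]) then \<Phi> s else 0))"
    by (subst expectation_markov_traj_Suc, unfold last_snoc) (use supp closed in auto)
  also have "\<dots> \<le> measure_pmf.expectation (markov_traj K s0 t)
      (\<lambda>xs. (if survives P xs then \<Phi> (last xs) else 0) - (if survives P xs then 1 else 0))"
    by (intro integral_mono_AE integrable, unfold AE_measure_pmf_iff,
        intro ballI stopped_potential_one_step[OF closed nonneg drift])
      (use supp in auto)
  also have "\<dots> = measure_pmf.expectation (markov_traj K s0 t)
      (\<lambda>xs. if survives P xs then \<Phi> (last xs) else 0)
      - measure_pmf.expectation (markov_traj K s0 t) (\<lambda>xs. if survives P xs then 1 else 0)"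
    by (rule Bochner_Integration.integral_diff) (rule integrable)+
  also have "(\<lambda>xs. if survives P xs then 1 else 0 :: real) = indicator {xs. survives P xs}"
    by (auto simp: indicator_def)
  finally show ?thesis by simp
qed

lemma additive_drift:
  fixes K :: "'s \<Rightarrow> 's pmf" and \<Phi> :: "'s \<Rightarrow> real"
  assumes s0: "s0 \<in> I"
    and closed: "\<And>s. s \<in> I \<Longrightarrow> set_pmf (K s) \<subseteq> I \<and> finite (set_pmf (K s))"
    and nonneg: "\<And>s. s \<in> I \<Longrightarrow> \<Phi> s \<ge> 0"
    and drift: "\<And>s. s \<in> I \<Longrightarrow> \<not> P s \<Longrightarrow> measure_pmf.expectation (K s) \<Phi> \<le> \<Phi> s - 1"
  shows "(\<Sum>t. ennreal (measure_pmf.prob (markov_traj K s0 t) {xs. \<forall>s\<in>set xs. \<not> P s}))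
    \<le> ennreal (\<Phi> s0)"
proof -
  define a where "a t = measure_pmf.prob (markov_traj K s0 t) {xs. survives P xs}" for t
  define b where "b t = measure_pmf.expectation (markov_traj K s0 t)
    (\<lambda>xs. if survives P xs then \<Phi> (last xs) else 0)" for t
  have b_step: "b (Suc t) \<le> b t - a t" for t
    unfolding a_def b_def by (rule stopped_potential_step[OF s0 closed nonneg drift])
  have b_nonneg: "b t \<ge> 0" for t
    unfolding b_def using markov_traj_support[of s0 I K, OF s0 closed] nonneg
    by (intro integral_nonneg_AE) (auto simp: AE_measure_pmf_iff)
  have b_0: "b 0 \<le> \<Phi> s0"
    unfolding b_def using nonneg[OF s0] by (simp add: survives_def)
  have telescope: "(\<Sum>t<N. a t) \<le> b 0 - b N" for N
  proof (induction N)
    case (Suc N)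
    then show ?case using b_step[of N] by simp
  qed simp
  have "(\<Sum>t. ennreal (a t)) \<le> ennreal (\<Phi> s0)"
  proof (rule suminf_le_const[OF summableI])
    fix N
    have "(\<Sum>t<N. a t) \<le> \<Phi> s0"
      using telescope[of N] b_nonneg[of N] b_0 by linarith
    then show "(\<Sum>t<N. ennreal (a t)) \<le> ennreal (\<Phi> s0)"
      by (simp add: a_def sum_ennreal ennreal_leI)
  qed
  then show ?thesis unfolding a_def survives_def .
qed

section \<open>The Moran step as an average over edges\<close>

locale moran_graph =
  fixes V :: "'v set" and E :: "'v \<Rightarrow> 'v \<Rightarrow> bool" and \<tau> :: "'t set" and f :: "'t \<Rightarrow> rat"
  assumes connected: "connected_graph V E"
    and two_le_card_V: "card V \<ge> 2"
    and fitness_ge_1: "\<forall>x\<in>\<tau>. f x \<ge> 1"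
    and finite_types: "finite \<tau>"
begin

abbreviation fit :: "'t \<Rightarrow> real" where "fit t \<equiv> real_of_rat (f t)"
abbreviation card_V :: real where "card_V \<equiv> real (card V)"

definition states :: "('v \<Rightarrow> 't) set" where "states = {S. S ` V \<subseteq> \<tau>}"
definition deg :: "'v \<Rightarrow> real" where "deg v = real (card (nbhd V E v))"
definition total_fitness :: "('v \<Rightarrow> 't) \<Rightarrow> real" where "total_fitness S = (\<Sum>u\<in>V. fit (S u))"

lemma finite_V: "finite V"
  using connected by (simp add: connected_graph_def simple_graph_def)

lemma edge_in_V: "E u w \<Longrightarrow> u \<in> V \<and> w \<in> V"
  using connected by (simp add: connected_graph_def simple_graph_def)

lemma edge_sym: "E u w \<Longrightarrow> E w u"
  using connected by (simp add: connected_graph_def simple_graph_def)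

lemma edge_irrefl: "\<not> E u u"
  using connected by (simp add: connected_graph_def simple_graph_def)

lemma finite_nbhd: "finite (nbhd V E v)"
  using finite_V by (simp add: nbhd_def)

lemma nbhd_nonempty:
  assumes "v \<in> V" shows "nbhd V E v \<noteq> {}"
proof -
  obtain u where u: "u \<in> V" "u \<noteq> v"
    using two_le_card_V card_le_Suc0_iff_eq[OF finite_V]
    by (metis One_nat_def not_less_eq_eq numerals(2))
  have "E\<^sup>*\<^sup>* v u" using connected assms u by (simp add: connected_graph_def)
  then obtain y where "E v y" using u(2) by (metis converse_rtranclpE)
  then show ?thesis using edge_in_V unfolding nbhd_def by blast
qed

lemma edge_crossing:
  assumes "x \<in> V" "y \<in> V" "Q x" "\<not> Q y"
  obtains v w where "v \<in> V" "w \<in> V" "E v w" "Q v" "\<not> Q w"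
proof -
  have "E\<^sup>*\<^sup>* x y" using connected assms by (simp add: connected_graph_def)
  then have "\<exists>v w. E v w \<and> Q v \<and> \<not> Q w" using assms(3,4)
    by (induction rule: rtranclp_induct) blast+
  then show ?thesis using that edge_in_V by blast
qed

lemma deg_ge_1: "v \<in> V \<Longrightarrow> deg v \<ge> 1"
  using nbhd_nonempty finite_nbhd unfolding deg_def by (simp add: Suc_le_eq card_gt_0_iff)

lemma deg_nonneg [simp]: "deg v \<ge> 0"
  unfolding deg_def by simp

lemma deg_le_card_V: "deg v \<le> card_V"
  unfolding deg_def nbhd_def using finite_V by (simp add: card_mono)

lemma fit_ge_1: "S \<in> states \<Longrightarrow> v \<in> V \<Longrightarrow> fit (S v) \<ge> 1"
  using fitness_ge_1 of_rat_less_eq[of 1 "f (S v)"] unfolding states_def by auto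

lemma total_fitness_pos: assumes "S \<in> states" shows "total_fitness S > 0"
proof -
  obtain v where "v \<in> V" using two_le_card_V by fastforce
  then have "fit (S v) \<le> total_fitness S"
    unfolding total_fitness_def using finite_V fit_ge_1[OF assms]
    by (intro member_le_sum) (auto intro: order_trans[OF zero_le_one])
  then show ?thesis using fit_ge_1[OF assms \<open>v \<in> V\<close>] by linarith
qed

lemma upd_in_states: "S \<in> states \<Longrightarrow> v \<in> V \<Longrightarrow> S(w := S v) \<in> states"
  unfolding states_def by auto

definition parent_prob :: "('v \<Rightarrow> 't) \<Rightarrow> 'v \<Rightarrow> real" where
  "parent_prob S v = (if v \<in> V then fit (S v) / total_fitness S else 0)"

lemma pmf_parent:
  assumes "S \<in> states" shows "pmf (embed_pmf (parent_prob S)) v = parent_prob S v"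
proof (rule pmf_embed_pmf)
  show nonneg: "parent_prob S x \<ge> 0" for x
    using fit_ge_1[OF assms] total_fitness_pos[OF assms] unfolding parent_prob_def
    by (auto intro!: divide_nonneg_pos intro: order_trans[OF zero_le_one])
  have "(\<integral>\<^sup>+x. ennreal (parent_prob S x) \<partial>count_space UNIV) = ennreal (\<Sum>x\<in>V. parent_prob S x)"
    using finite_V nonneg
    by (subst nn_integral_count_space') (auto simp: parent_prob_def sum_ennreal)
  also have "(\<Sum>x\<in>V. parent_prob S x) = 1"
    using total_fitness_pos[OF assms] unfolding parent_prob_def total_fitness_def
    by (simp add: sum_divide_distrib[symmetric])
  finally show "(\<integral>\<^sup>+x. ennreal (parent_prob S x) \<partial>count_space UNIV) = 1" by simp
qed

lemma set_pmf_parent: "S \<in> states \<Longrightarrow> set_pmf (embed_pmf (parent_prob S)) \<subseteq> V"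
  by (auto simp: set_pmf_eq pmf_parent parent_prob_def split: if_splits)

lemma moran_step_eq: "moran_step V E f S = bind_pmf (embed_pmf (parent_prob S))
   (\<lambda>v. map_pmf (\<lambda>w. S(w := S v)) (pmf_of_set (nbhd V E v)))"
  unfolding moran_step_def parent_prob_def total_fitness_def by simp

lemma set_pmf_moran_step:
  assumes "S \<in> states"
  shows "set_pmf (moran_step V E f S) \<subseteq> (\<lambda>(v, w). S(w := S v)) ` {(v, w). E v w}"
  using set_pmf_parent[OF assms] nbhd_nonempty finite_nbhd
  by (fastforce simp: moran_step_eq set_bind_pmf nbhd_def)

lemma moran_step_closed:
  assumes "S \<in> states"
  shows "set_pmf (moran_step V E f S) \<subseteq> states \<and> finite (set_pmf (moran_step V E f S))"
proof
  show "set_pmf (moran_step V E f S) \<subseteq> states"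
    using set_pmf_moran_step[OF assms] upd_in_states[OF assms] edge_in_V by fastforce
  have "{(v, w). E v w} \<subseteq> V \<times> V" using edge_in_V by auto
  then have "finite {(v, w). E v w}" using finite_V by (meson finite_SigmaI finite_subset)
  then show "finite (set_pmf (moran_step V E f S))"
    using set_pmf_moran_step[OF assms] by (meson finite_imageI finite_subset)
qed

definition edge_weight :: "('v \<Rightarrow> 't) \<Rightarrow> 'v \<Rightarrow> real" where
  "edge_weight S v = fit (S v) / (total_fitness S * deg v)"

definition edge_avg :: "('v \<Rightarrow> 't) \<Rightarrow> ('v \<Rightarrow> 'v \<Rightarrow> real) \<Rightarrow> real" where
  "edge_avg S h = (\<Sum>v\<in>V. \<Sum>w\<in>V. if E v w then edge_weight S v * h v w else 0)"

lemma expectation_moran_step: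
  assumes S: "S \<in> states"
  shows "measure_pmf.expectation (moran_step V E f S) g = edge_avg S (\<lambda>v w. g (S(w := S v)))"
proof -
  have "measure_pmf.expectation (moran_step V E f S) g =
     (\<Sum>v\<in>V. pmf (embed_pmf (parent_prob S)) v *\<^sub>R
        measure_pmf.expectation (map_pmf (\<lambda>w. S(w := S v)) (pmf_of_set (nbhd V E v))) g)"
    unfolding moran_step_eq
    by (rule pmf_expectation_bind)
      (use finite_V set_pmf_parent[OF S] finite_nbhd nbhd_nonempty in auto)
  also have "\<dots> = (\<Sum>v\<in>V. parent_prob S v * (\<Sum>w\<in>nbhd V E v. g (S(w := S v))) / deg v)"
    by (intro sum.cong refl)
      (simp add: pmf_parent[OF S] integral_pmf_of_set finite_nbhd nbhd_nonempty deg_def)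
  also have "\<dots> = edge_avg S (\<lambda>v w. g (S(w := S v)))"
    unfolding edge_avg_def
  proof (intro sum.cong refl)
    fix v assume "v \<in> V"
    then have "parent_prob S v * (\<Sum>w\<in>nbhd V E v. g (S(w := S v))) / deg v
        = (\<Sum>w\<in>nbhd V E v. edge_weight S v * g (S(w := S v)))"
      by (simp add: parent_prob_def edge_weight_def sum_distrib_left sum_divide_distrib)
    also have "\<dots> = (\<Sum>w\<in>V. if E v w then edge_weight S v * g (S(w := S v)) else 0)"
      unfolding nbhd_def by (simp add: sum.inter_filter finite_V)
    finally show "parent_prob S v * (\<Sum>w\<in>nbhd V E v. g (S(w := S v))) / deg v = \<dots>" .
  qed
  finally show ?thesis .
qed

lemma edge_avg_cong:
  "(\<And>v w. v \<in> V \<Longrightarrow> w \<in> V \<Longrightarrow> E v w \<Longrightarrow> h v w = h' v w) \<Longrightarrow> edge_avg S h = edge_avg S h'"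
  unfolding edge_avg_def by (intro sum.cong refl) auto

lemma edge_weight_nonneg: "S \<in> states \<Longrightarrow> v \<in> V \<Longrightarrow> edge_weight S v \<ge> 0"
  unfolding edge_weight_def using fit_ge_1[of S v] total_fitness_pos[of S] deg_ge_1[of v]
  by (intro divide_nonneg_pos) auto

lemma edge_avg_mono:
  "S \<in> states \<Longrightarrow> (\<And>v w. v \<in> V \<Longrightarrow> w \<in> V \<Longrightarrow> E v w \<Longrightarrow> h v w \<le> h' v w)
    \<Longrightarrow> edge_avg S h \<le> edge_avg S h'"
  unfolding edge_avg_def by (intro sum_mono) (auto intro: mult_left_mono edge_weight_nonneg)

lemma edge_avg_add: "edge_avg S (\<lambda>v w. h v w + h' v w) = edge_avg S h + edge_avg S h'"
  unfolding edge_avg_def by (simp add: sum.distrib[symmetric] distrib_left if_distrib cong: if_cong)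

lemma edge_avg_diff: "edge_avg S (\<lambda>v w. h v w - h' v w) = edge_avg S h - edge_avg S h'"
  unfolding edge_avg_def sum_subtractf[symmetric]
  by (intro sum.cong refl) (auto simp: right_diff_distrib)

lemma edge_avg_cmult: "edge_avg S (\<lambda>v w. c * h v w) = c * edge_avg S h"
  unfolding edge_avg_def sum_distrib_left by (intro sum.cong refl) auto

lemma edge_avg_sum: "edge_avg S (\<lambda>v w. \<Sum>t\<in>T. h t v w) = (\<Sum>t\<in>T. edge_avg S (h t))"
proof -
  have "edge_avg S (\<lambda>v w. \<Sum>t\<in>T. h t v w)
      = (\<Sum>v\<in>V. \<Sum>w\<in>V. \<Sum>t\<in>T. if E v w then edge_weight S v * h t v w else 0)"
    unfolding edge_avg_def by (intro sum.cong refl) (simp add: sum_distrib_left)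
  also have "\<dots> = (\<Sum>t\<in>T. edge_avg S (h t))"
    unfolding edge_avg_def by (subst sum.swap) (simp add: sum.swap[of _ V T])
  finally show ?thesis .
qed

lemma edge_avg_const: assumes "S \<in> states" shows "edge_avg S (\<lambda>v w. c) = c"
proof -
  have "edge_avg S (\<lambda>v w. c) = (\<Sum>v\<in>V. edge_weight S v * deg v) * c"
    unfolding edge_avg_def deg_def nbhd_def sum_distrib_right
    by (intro sum.cong refl) (simp add: sum.If_cases finite_V Int_def)
  also have "(\<Sum>v\<in>V. edge_weight S v * deg v) = (\<Sum>v\<in>V. fit (S v) / total_fitness S)"
    using deg_ge_1 by (intro sum.cong refl) (force simp: edge_weight_def)
  also have "\<dots> = 1"
    using total_fitness_pos[OF assms] unfolding total_fitness_def
    by (simp add: sum_divide_distrib[symmetric])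
  finally show ?thesis by simp
qed

section \<open>Degree-weighted potentials\<close>

definition pot :: "'t set \<Rightarrow> ('v \<Rightarrow> 't) \<Rightarrow> real" where
  "pot A S = (\<Sum>x\<in>V. if S x \<in> A then 1 / deg x else 0)"

definition pot_max :: real where "pot_max = (\<Sum>x\<in>V. 1 / deg x)"

definition jump :: "'t set \<Rightarrow> ('v \<Rightarrow> 't) \<Rightarrow> 'v \<Rightarrow> 'v \<Rightarrow> real" where
  "jump A S v w = (if S v \<in> A then 1 else 0) - (if S w \<in> A then 1 else 0)"

definition pot_drift :: "'t set \<Rightarrow> ('v \<Rightarrow> 't) \<Rightarrow> real" where
  "pot_drift A S = edge_avg S (\<lambda>v w. jump A S v w / deg w)"

lemma pot_nonneg: "pot A S \<ge> 0"
  unfolding pot_def by (intro sum_nonneg) simp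

lemma pot_le_pot_max: "pot A S \<le> pot_max"
  unfolding pot_def pot_max_def using deg_ge_1
  by (intro sum_mono) (auto intro: order_trans[OF zero_le_one])

lemma pot_max_nonneg: "pot_max \<ge> 0"
  using pot_nonneg pot_le_pot_max by (meson order_trans)

lemma pot_max_le_card_V: "pot_max \<le> card_V"
proof -
  have "pot_max \<le> (\<Sum>x\<in>V. 1)"
    unfolding pot_max_def by (intro sum_mono) (use deg_ge_1 in \<open>fastforce simp: divide_le_eq_1\<close>)
  then show ?thesis by simp
qed

lemma sum_pot_singleton: assumes "S \<in> states" shows "(\<Sum>t\<in>\<tau>. pot {t} S) = pot_max"
proof -
  have "(\<Sum>t\<in>\<tau>. pot {t} S) = (\<Sum>x\<in>V. \<Sum>t\<in>\<tau>. if S x = t then 1 / deg x else 0)"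
    unfolding pot_def by (simp add: sum.swap[of _ \<tau>])
  also have "\<dots> = pot_max"
    unfolding pot_max_def using assms finite_types unfolding states_def
    by (intro sum.cong refl) (auto simp: sum.delta)
  finally show ?thesis .
qed

lemma pot_upd:
  assumes "w \<in> V" shows "pot A (S(w := S v)) = pot A S + jump A S v w / deg w"
proof -
  let ?rest = "\<Sum>x\<in>V - {w}. if S x \<in> A then 1 / deg x else 0"
  have "pot A (S(w := S v)) = (if S v \<in> A then 1 / deg w else 0) + ?rest"
    unfolding pot_def using assms finite_V by (subst sum.remove[of V w]) (auto intro!: sum.cong)
  moreover have "pot A S = (if S w \<in> A then 1 / deg w else 0) + ?rest"
    unfolding pot_def using assms finite_V by (subst sum.remove[of V w]) auto
  ultimately show ?thesis unfolding jump_def by (simp add: diff_divide_distrib)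
qed

lemma expectation_pot:
  assumes "S \<in> states"
  shows "measure_pmf.expectation (moran_step V E f S) (pot A) = pot A S + pot_drift A S"
proof -
  have "edge_avg S (\<lambda>v w. pot A (S(w := S v))) = edge_avg S (\<lambda>v w. pot A S + jump A S v w / deg w)"
    by (rule edge_avg_cong) (simp add: pot_upd)
  then show ?thesis
    unfolding expectation_moran_step[OF assms] pot_drift_def
    by (simp add: edge_avg_add edge_avg_const[OF assms])
qed

lemma pot_drift_symmetric:
  "2 * pot_drift A S = (\<Sum>v\<in>V. \<Sum>w\<in>V. if E v w
     then (fit (S v) - fit (S w)) * jump A S v w / (total_fitness S * deg v * deg w) else 0)"
proof -
  let ?a = "\<lambda>v w. if E v w then edge_weight S v * (jump A S v w / deg w) else 0"
  have "2 * pot_drift A S = (\<Sum>v\<in>V. \<Sum>w\<in>V. ?a v w) + (\<Sum>v\<in>V. \<Sum>w\<in>V. ?a w v)"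
    unfolding pot_drift_def edge_avg_def by (subst (2) sum.swap) simp
  also have "\<dots> = (\<Sum>v\<in>V. \<Sum>w\<in>V. ?a v w + ?a w v)"
    by (simp add: sum.distrib)
  also have "\<dots> = (\<Sum>v\<in>V. \<Sum>w\<in>V. if E v w
     then (fit (S v) - fit (S w)) * jump A S v w / (total_fitness S * deg v * deg w) else 0)"
    using edge_sym by (intro sum.cong refl)
      (auto simp: edge_weight_def jump_def diff_divide_distrib ac_simps)
  finally show ?thesis .
qed

lemma pot_drift_neutral:
  assumes "\<forall>x\<in>V. fit (S x) = c" shows "pot_drift A S = 0"
proof -
  have "2 * pot_drift A S = 0"
    unfolding pot_drift_symmetric using assms by (intro sum.neutral ballI) auto
  then show ?thesis by simp
qed

lemma pot_drift_top_class:
  assumes S: "S \<in> states" and top: "\<forall>x\<in>V. fit (S x) \<le> ft"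
    and in_A: "\<forall>x\<in>V. S x \<in> A \<longleftrightarrow> fit (S x) = ft"
    and edge: "E v0 w0" "S v0 \<in> A" "S w0 \<notin> A"
    and gap: "fit (S w0) \<le> fs" "fs \<le> ft"
  shows "pot_drift A S \<ge> (ft - fs) / (ft * card_V ^ 3)"
proof -
  let ?b = "\<lambda>(v, w). if E v w
    then (fit (S v) - fit (S w)) * jump A S v w / (total_fitness S * deg v * deg w) else 0"
  let ?den = "total_fitness S * deg v0 * deg w0"
  have v0w0: "v0 \<in> V" "w0 \<in> V" "v0 \<noteq> w0" using edge edge_in_V edge_irrefl by blast+
  have den_pos: "0 < ?den"
    using total_fitness_pos[OF S] deg_ge_1[of v0] deg_ge_1[of w0] v0w0 by simp
  have b_nonneg: "?b p \<ge> 0" if pV: "p \<in> V \<times> V" for p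
  proof -
    obtain v w where p: "p = (v, w)" "v \<in> V" "w \<in> V" using pV by blast
    have "(fit (S v) - fit (S w)) * jump A S v w \<ge> 0"
      using in_A top p unfolding jump_def by auto
    then show ?thesis using p deg_ge_1[of v] deg_ge_1[of w] total_fitness_pos[OF S] by auto
  qed
  have "2 * ((ft - fit (S w0)) / ?den) = (\<Sum>p\<in>{(v0, w0), (w0, v0)}. ?b p)"
    using v0w0 edge edge_sym[OF edge(1)] in_A unfolding jump_def by (auto simp: field_simps)
  also have "\<dots> \<le> (\<Sum>p\<in>V \<times> V. ?b p)"
    by (rule sum_mono2) (use finite_V v0w0 b_nonneg in auto)
  also have "\<dots> = 2 * pot_drift A S"
    unfolding pot_drift_symmetric by (simp add: sum.cartesian_product)
  finally have "(ft - fit (S w0)) / ?den \<le> pot_drift A S" by linarith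
  moreover have "?den \<le> ft * card_V ^ 3"
  proof -
    have "total_fitness S \<le> card_V * ft"
      unfolding total_fitness_def using sum_bounded_above[of V "\<lambda>u. fit (S u)" ft] top by simp
    then have "?den \<le> (card_V * ft) * card_V * card_V"
      using deg_le_card_V deg_ge_1 v0w0 total_fitness_pos[OF S] by (intro mult_mono) auto
    then show ?thesis by (simp add: power3_eq_cube ac_simps)
  qed
  then have "(ft - fs) / (ft * card_V ^ 3) \<le> (ft - fit (S w0)) / ?den"
    using den_pos gap by (intro frac_le) auto
  ultimately show ?thesis by linarith
qed

lemma edge_avg_jump_sq_ge:
  assumes S: "S \<in> states" and c: "\<forall>x\<in>V. fit (S x) = c"
    and edge: "E v0 w0" "S v0 \<in> A" "S w0 \<notin> A"
  shows "edge_avg S (\<lambda>v w. (jump A S v w / deg w)^2) \<ge> 1 / card_V ^ 4"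
proof -
  let ?g = "\<lambda>v w. if E v w then edge_weight S v * (jump A S v w / deg w)^2 else 0"
  have v0w0: "v0 \<in> V" "w0 \<in> V" using edge edge_in_V by blast+
  have g_nonneg: "?g v w \<ge> 0" if "v \<in> V" for v w using edge_weight_nonneg[OF S that] by simp
  have "?g v0 w0 \<le> (\<Sum>w\<in>V. ?g v0 w)"
    by (rule member_le_sum) (use v0w0 finite_V g_nonneg in auto)
  also have "\<dots> \<le> edge_avg S (\<lambda>v w. (jump A S v w / deg w)^2)"
    unfolding edge_avg_def
    by (rule member_le_sum[where f = "\<lambda>v. \<Sum>w\<in>V. ?g v w"])
      (use v0w0 finite_V g_nonneg in \<open>auto intro: sum_nonneg\<close>)
  finally have "?g v0 w0 \<le> edge_avg S (\<lambda>v w. (jump A S v w / deg w)^2)" .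
  moreover have "?g v0 w0 = 1 / (card_V * deg v0 * deg w0 ^ 2)"
  proof -
    have "c \<ge> 1" using c fit_ge_1[OF S v0w0(1)] v0w0 by auto
    moreover have "total_fitness S = card_V * c" unfolding total_fitness_def using c by simp
    ultimately show ?thesis
      using edge c v0w0 unfolding edge_weight_def jump_def
      by (auto simp: field_simps power2_eq_square)
  qed
  moreover have "1 / card_V ^ 4 \<le> 1 / (card_V * deg v0 * deg w0 ^ 2)"
  proof (rule divide_left_mono)
    have "deg w0 ^ 2 \<le> card_V ^ 2"
      using deg_le_card_V deg_ge_1[of w0] v0w0 by (intro power_mono) auto
    then have "card_V * deg v0 * deg w0 ^ 2 \<le> card_V * card_V * card_V ^ 2"
      using deg_le_card_V deg_ge_1[of v0] v0w0 by (intro mult_mono) auto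
    then show "card_V * deg v0 * deg w0 ^ 2 \<le> card_V ^ 4"
      by (simp add: power_numeral_reduce ac_simps)
    show "0 < card_V ^ 4 * (card_V * deg v0 * deg w0 ^ 2)"
      using deg_ge_1[of v0] deg_ge_1[of w0] v0w0 two_le_card_V by simp
  qed simp
  ultimately show ?thesis by linarith
qed

definition qpot :: "'t set \<Rightarrow> ('v \<Rightarrow> 't) \<Rightarrow> real" where
  "qpot A S = pot A S * (pot_max - pot A S)"

definition neutral_pot :: "('v \<Rightarrow> 't) \<Rightarrow> real" where
  "neutral_pot S = card_V ^ 4 * (\<Sum>t\<in>\<tau>. qpot {t} S)"

lemma expectation_qpot:
  assumes S: "S \<in> states"
  shows "measure_pmf.expectation (moran_step V E f S) (qpot A)
    = qpot A S + (pot_max - 2 * pot A S) * pot_drift A S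
      - edge_avg S (\<lambda>v w. (jump A S v w / deg w)^2)"
proof -
  have "edge_avg S (\<lambda>v w. qpot A (S(w := S v))) = edge_avg S (\<lambda>v w.
      (qpot A S + (pot_max - 2 * pot A S) * (jump A S v w / deg w)) - (jump A S v w / deg w)^2)"
    by (rule edge_avg_cong) (simp add: pot_upd qpot_def algebra_simps power2_eq_square)
  then show ?thesis
    unfolding expectation_moran_step[OF S] pot_drift_def
      edge_avg_diff edge_avg_add edge_avg_cmult edge_avg_const[OF S] .
qed

lemma neutral_pot_nonneg: "neutral_pot S \<ge> 0"
  unfolding neutral_pot_def qpot_def using pot_nonneg pot_le_pot_max
  by (simp add: sum_nonneg)

lemma neutral_pot_le: assumes "S \<in> states" shows "neutral_pot S \<le> card_V ^ 6"
proof -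
  have "(\<Sum>t\<in>\<tau>. qpot {t} S) \<le> (\<Sum>t\<in>\<tau>. pot {t} S * pot_max)"
    unfolding qpot_def using pot_nonneg pot_le_pot_max by (intro sum_mono mult_left_mono) auto
  also have "\<dots> = pot_max * pot_max"
    using sum_pot_singleton[OF assms] by (simp add: sum_distrib_right[symmetric])
  also have "\<dots> \<le> card_V * card_V"
    using pot_max_le_card_V pot_max_nonneg by (intro mult_mono) auto
  finally have "neutral_pot S \<le> card_V ^ 4 * (card_V * card_V)"
    unfolding neutral_pot_def by (intro mult_left_mono) auto
  then show ?thesis by (simp add: power_numeral_reduce ac_simps)
qed

lemma neutral_pot_drift:
  assumes S: "S \<in> states" and c: "\<forall>x\<in>V. fit (S x) = c"
    and distinct: "v1 \<in> V" "w1 \<in> V" "S v1 \<noteq> S w1"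
  shows "measure_pmf.expectation (moran_step V E f S) neutral_pot \<le> neutral_pot S - 1"
proof -
  let ?sq = "\<lambda>t. edge_avg S (\<lambda>v w. (jump {t} S v w / deg w)^2)"
  have sq_nonneg: "?sq t \<ge> 0" for t
    using edge_avg_mono[OF S, of "\<lambda>v w. 0"] edge_avg_const[OF S, of 0] by simp
  obtain v0 w0 where edge: "E v0 w0" "S v0 = S v1" "S w0 \<noteq> S v1"
    using edge_crossing[of v1 w1 "\<lambda>x. S x = S v1"] distinct by metis
  have "1 / card_V ^ 4 \<le> ?sq (S v1)"
    by (rule edge_avg_jump_sq_ge[OF S c edge(1)]) (use edge in auto)
  also have "\<dots> \<le> (\<Sum>t\<in>\<tau>. ?sq t)"
    using S distinct finite_types sq_nonneg unfolding states_def
    by (intro member_le_sum) auto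
  finally have sq_sum: "1 / card_V ^ 4 \<le> (\<Sum>t\<in>\<tau>. ?sq t)" .
  have "measure_pmf.expectation (moran_step V E f S) neutral_pot
      = card_V ^ 4 * (\<Sum>t\<in>\<tau>. measure_pmf.expectation (moran_step V E f S) (qpot {t}))"
    unfolding expectation_moran_step[OF S] neutral_pot_def edge_avg_cmult edge_avg_sum ..
  also have "\<dots> = card_V ^ 4 * ((\<Sum>t\<in>\<tau>. qpot {t} S) - (\<Sum>t\<in>\<tau>. ?sq t))"
    by (simp add: expectation_qpot[OF S] pot_drift_neutral[OF c] sum_subtractf)
  also have "\<dots> \<le> card_V ^ 4 * ((\<Sum>t\<in>\<tau>. qpot {t} S) - 1 / card_V ^ 4)"
    using sq_sum by (intro mult_left_mono) auto
  also have "\<dots> = neutral_pot S - 1"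
    unfolding neutral_pot_def using two_le_card_V by (simp add: right_diff_distrib)
  finally show ?thesis .
qed

section \<open>Fitness levels\<close>

abbreviation num_levels :: nat where "num_levels \<equiv> nfit f \<tau>"
abbreviation level :: "nat \<Rightarrow> real" where "level \<equiv> fitv f \<tau>"

lemma level_strict_mono:
  assumes "1 \<le> i" "i < j" "j \<le> num_levels" shows "level i < level j"
proof -
  let ?xs = "sorted_list_of_set (f ` \<tau>)"
  have "length ?xs = num_levels" unfolding nfit_def by (simp add: finite_types)
  then have "?xs ! (i - 1) < ?xs ! (j - 1)"
    using sorted_wrt_nth_less[OF strict_sorted_list_of_set[of "f ` \<tau>"], of "i - 1" "j - 1"] assms
    by simp
  then show ?thesis unfolding fitv_def by (simp add: of_rat_less)
qed

lemma level_mono: "1 \<le> i \<Longrightarrow> i \<le> j \<Longrightarrow> j \<le> num_levels \<Longrightarrow> level i \<le> level j"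
  using level_strict_mono[of i j] by (cases "i = j") auto

lemma fit_eq_level: assumes "t \<in> \<tau>" obtains i where "i \<in> {1..num_levels}" "fit t = level i"
proof -
  have "f t \<in> set (sorted_list_of_set (f ` \<tau>))" using assms finite_types by simp
  then obtain j where "j < num_levels" "sorted_list_of_set (f ` \<tau>) ! j = f t"
    by (metis in_set_conv_nth length_sorted_list_of_set nfit_def)
  then show ?thesis using that[of "Suc j"] unfolding fitv_def by auto
qed

lemma level_ge_1: assumes "i \<in> {1..num_levels}" shows "level i \<ge> 1"
proof -
  have "i - 1 < length (sorted_list_of_set (f ` \<tau>))"
    using assms finite_types by (auto simp: nfit_def)
  then have "sorted_list_of_set (f ` \<tau>) ! (i - 1) \<in> set (sorted_list_of_set (f ` \<tau>))"
    by (rule nth_mem)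
  then have "sorted_list_of_set (f ` \<tau>) ! (i - 1) \<in> f ` \<tau>"
    using finite_types by simp
  then show ?thesis unfolding fitv_def using fitness_ge_1 of_rat_less_eq[of 1] by fastforce
qed

lemma one_le_fit_mult: assumes "t \<in> \<tau>" "fit t = level i" shows "1 \<le> fit_mult f \<tau> i"
proof -
  have "{x \<in> \<tau>. fit x = level i} \<noteq> {}" using assms by blast
  then show ?thesis unfolding fit_mult_def using finite_types by (simp add: Suc_le_eq card_gt_0_iff)
qed

lemma two_le_fit_mult:
  assumes "t1 \<in> \<tau>" "t2 \<in> \<tau>" "t1 \<noteq> t2" "fit t1 = level i" "fit t2 = level i"
  shows "2 \<le> fit_mult f \<tau> i"
proof -
  have "card {t1, t2} \<le> card {x \<in> \<tau>. fit x = level i}"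
    using assms finite_types by (intro card_mono) auto
  then show ?thesis unfolding fit_mult_def using assms(3) by simp
qed

definition levels_present :: "('v \<Rightarrow> 't) \<Rightarrow> nat set" where
  "levels_present S = {i \<in> {1..num_levels}. \<exists>x\<in>V. fit (S x) = level i}"

definition top_level :: "('v \<Rightarrow> 't) \<Rightarrow> nat" where
  "top_level S = Max (levels_present S)"

definition is_neutral :: "('v \<Rightarrow> 't) \<Rightarrow> bool" where
  "is_neutral S \<longleftrightarrow> (\<forall>x\<in>V. fit (S x) = level (top_level S))"

definition level_types :: "nat \<Rightarrow> 't set" where
  "level_types i = {t. fit t = level i}"

lemma level_present:
  "x \<in> V \<Longrightarrow> fit (S x) = level i \<Longrightarrow> i \<in> {1..num_levels} \<Longrightarrow> i \<in> levels_present S"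
  unfolding levels_present_def by blast

lemma top_level_present:
  assumes "S \<in> states"
  shows "top_level S \<in> levels_present S" "1 \<le> top_level S" "top_level S \<le> num_levels"
proof -
  obtain x where x: "x \<in> V" using two_le_card_V by fastforce
  then obtain i where "i \<in> {1..num_levels}" "fit (S x) = level i"
    using assms fit_eq_level unfolding states_def by blast
  then have "levels_present S \<noteq> {}" using level_present[OF x] by blast
  moreover have "finite (levels_present S)" unfolding levels_present_def by simp
  ultimately show "top_level S \<in> levels_present S"
    unfolding top_level_def by (rule Max_in[rotated])
  then show "1 \<le> top_level S" "top_level S \<le> num_levels"
    unfolding levels_present_def by auto
qed

lemma le_top_level: "i \<in> levels_present S \<Longrightarrow> i \<le> top_level S"
  unfolding top_level_def levels_present_def by simp

lemma fit_le_top_level: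
  assumes S: "S \<in> states" and x: "x \<in> V"
  shows "fit (S x) \<le> level (top_level S)"
    and "fit (S x) \<noteq> level (top_level S) \<Longrightarrow> fit (S x) \<le> level (top_level S - 1)"
proof -
  obtain i where i: "i \<in> {1..num_levels}" "fit (S x) = level i"
    using S x fit_eq_level unfolding states_def by blast
  then have "i \<le> top_level S" using le_top_level level_present[OF x] by blast
  then show "fit (S x) \<le> level (top_level S)"
    using i level_mono top_level_present[OF S] by auto
  assume "fit (S x) \<noteq> level (top_level S)"
  then have "i \<le> top_level S - 1" using i \<open>i \<le> top_level S\<close> by (cases "i = top_level S") auto
  then show "fit (S x) \<le> level (top_level S - 1)"
    using i level_mono top_level_present[OF S] by auto
qed

lemma two_le_top_level:
  assumes S: "S \<in> states" and "\<not> is_neutral S" shows "2 \<le> top_level S"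
proof -
  obtain x where x: "x \<in> V" "fit (S x) \<noteq> level (top_level S)"
    using assms(2) unfolding is_neutral_def by blast
  then obtain i where i: "i \<in> {1..num_levels}" "fit (S x) = level i"
    using S fit_eq_level unfolding states_def by blast
  then have "i \<le> top_level S" using le_top_level level_present[OF x(1)] by blast
  then show ?thesis using i x by (cases "i = top_level S") auto
qed

lemma top_level_upd_le:
  assumes S: "S \<in> states" and v: "v \<in> V" shows "top_level (S(w := S v)) \<le> top_level S"
proof -
  have "levels_present (S(w := S v)) \<subseteq> levels_present S"
    unfolding levels_present_def using v by auto
  then show ?thesis
    using top_level_present(1)[OF upd_in_states[OF S v]] le_top_level by blast
qed

lemma is_neutral_upd:
  assumes S: "S \<in> states" and v: "v \<in> V" and neutral: "is_neutral S"
  shows "is_neutral (S(w := S v))"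
proof -
  let ?S = "S(w := S v)"
  have "fit (?S x) = level (top_level S)" if "x \<in> V" for x
    using neutral v that unfolding is_neutral_def by simp
  moreover obtain x where "x \<in> V" using two_le_card_V by fastforce
  ultimately have "top_level S \<in> levels_present ?S"
    using top_level_present(2,3)[OF S] unfolding levels_present_def by auto
  then have "top_level S \<le> top_level ?S" by (rule le_top_level)
  then have "top_level ?S = top_level S" using top_level_upd_le[OF S v, of w] by linarith
  then show ?thesis
    using neutral v unfolding is_neutral_def by simp
qed

(* Chosen so that level_weight i times the lower bound of pot_drift_top_class for the top class at
   level i (ft = level i, fs = level (i - 1)) is exactly 1. *)
definition level_weight :: "nat \<Rightarrow> real" where
  "level_weight i = level i / (level i - level (i - 1)) * card_V ^ 3"

lemma level_gap:
  assumes "2 \<le> i" "i \<le> num_levels" shows "1 \<le> level (i - 1)" "level (i - 1) < level i"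
proof -
  have "i - 1 \<in> {1..num_levels}" using assms by auto
  then show "1 \<le> level (i - 1)" "level (i - 1) < level i"
    using level_ge_1 level_strict_mono[of "i - 1" i] assms by auto
qed

lemma level_weight_nonneg:
  assumes "2 \<le> i" "i \<le> num_levels" shows "level_weight i \<ge> 0"
  using level_gap[OF assms] unfolding level_weight_def
  by (intro mult_nonneg_nonneg divide_nonneg_pos) auto

lemma level_weight_pot_drift:
  assumes S: "S \<in> states" and not_neutral: "\<not> is_neutral S"
  shows "level_weight (top_level S) * pot_drift (level_types (top_level S)) S \<ge> 1"
proof -
  let ?m = "top_level S"
  have m: "2 \<le> ?m" "?m \<le> num_levels"
    using two_le_top_level[OF S not_neutral] top_level_present[OF S] by auto
  note gap = level_gap[OF m]
  obtain x0 where x0: "x0 \<in> V" "fit (S x0) = level ?m"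
    using top_level_present(1)[OF S] unfolding levels_present_def by blast
  obtain y0 where y0: "y0 \<in> V" "fit (S y0) \<noteq> level ?m"
    using not_neutral unfolding is_neutral_def by blast
  obtain v0 w0 where edge: "E v0 w0" "fit (S v0) = level ?m" "fit (S w0) \<noteq> level ?m"
    using edge_crossing[of x0 y0 "\<lambda>x. fit (S x) = level ?m"] x0 y0 by blast
  have "(level ?m - level (?m - 1)) / (level ?m * card_V ^ 3) \<le> pot_drift (level_types ?m) S"
  proof (rule pot_drift_top_class[OF S])
    show "\<forall>x\<in>V. fit (S x) \<le> level ?m" using fit_le_top_level(1)[OF S] by blast
    show "fit (S w0) \<le> level (?m - 1)"
      using fit_le_top_level(2)[OF S _ edge(3)] edge(1) edge_in_V by blast
  qed (use edge gap in \<open>auto simp: level_types_def\<close>)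
  then have "level_weight ?m * ((level ?m - level (?m - 1)) / (level ?m * card_V ^ 3))
      \<le> level_weight ?m * pot_drift (level_types ?m) S"
    using level_weight_nonneg[OF m] by (rule mult_left_mono)
  moreover have "level_weight ?m * ((level ?m - level (?m - 1)) / (level ?m * card_V ^ 3)) = 1"
    using gap two_le_card_V unfolding level_weight_def by (simp add: field_simps)
  ultimately show ?thesis by linarith
qed

end

section \<open>The absorption potential\<close>

(* P is the absorption event of the bound being proved, lo the first index of its sum over fitness
   levels and ell the multiplicity (l or l_j) in its first term. *)
locale moran_absorption = moran_graph V E \<tau> f
  for V :: "'v set" and E :: "'v \<Rightarrow> 'v \<Rightarrow> bool" and \<tau> :: "'t set" and f :: "'t \<Rightarrow> rat" +
  fixes P :: "('v \<Rightarrow> 't) \<Rightarrow> bool" and lo :: nat and ell :: nat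
  assumes two_le_lo: "2 \<le> lo"
    and one_le_ell: "1 \<le> ell"
    and lo_le_top_level: "\<And>S. S \<in> states \<Longrightarrow> \<not> P S \<Longrightarrow> \<not> is_neutral S \<Longrightarrow> lo \<le> top_level S"
    and two_le_ell: "\<And>S. S \<in> states \<Longrightarrow> \<not> P S \<Longrightarrow> is_neutral S \<Longrightarrow> 2 \<le> ell"
    and not_monochromatic: "\<And>S. S \<in> states \<Longrightarrow> \<not> P S \<Longrightarrow> \<exists>v\<in>V. \<exists>w\<in>V. S v \<noteq> S w"
begin

definition lower_levels :: "nat \<Rightarrow> real" where
  "lower_levels m = (\<Sum>i\<in>{lo..<m}. level_weight i * pot_max)"

definition absorption_pot :: "('v \<Rightarrow> 't) \<Rightarrow> real" where
  "absorption_pot S = (if P S then 0 else if is_neutral S then neutral_pot S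
     else level_weight (top_level S) * (pot_max - pot (level_types (top_level S)) S)
       + lower_levels (top_level S) + (real ell - 1) * card_V ^ 6)"

lemma lower_levels_mono:
  assumes "m \<le> m'" "m' \<le> Suc num_levels" shows "lower_levels m \<le> lower_levels m'"
  unfolding lower_levels_def using assms two_le_lo level_weight_nonneg pot_max_nonneg
  by (intro sum_mono2) auto

lemma lower_levels_nonneg: "m \<le> Suc num_levels \<Longrightarrow> lower_levels m \<ge> 0"
  using lower_levels_mono[of 0 m] by (simp add: lower_levels_def)

lemma top_term_le_lower_levels:
  assumes "lo \<le> m" "m \<le> num_levels"
  shows "level_weight m * (pot_max - pot A S) + lower_levels m \<le> lower_levels (Suc m)"
proof -
  have "level_weight m * (pot_max - pot A S) \<le> level_weight m * pot_max"
    using level_weight_nonneg[of m] assms two_le_lo pot_nonneg[of A S] by (simp add: mult_left_mono)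
  then show ?thesis unfolding lower_levels_def using assms by simp
qed

lemma neutral_pot_le_ell:
  assumes "S \<in> states" "\<not> P S" "is_neutral S"
  shows "neutral_pot S \<le> (real ell - 1) * card_V ^ 6"
proof -
  have "card_V ^ 6 \<le> (real ell - 1) * card_V ^ 6"
    using two_le_ell[OF assms] by (simp add: mult_le_cancel_right1)
  then show ?thesis using neutral_pot_le[OF assms(1)] by linarith
qed

lemma absorption_pot_nonneg: assumes S: "S \<in> states" shows "absorption_pot S \<ge> 0"
proof (cases "P S \<or> is_neutral S")
  case False
  then have m: "2 \<le> top_level S" "top_level S \<le> num_levels"
    using two_le_top_level[OF S] top_level_present[OF S] by auto
  have "level_weight (top_level S) * (pot_max - pot (level_types (top_level S)) S) \<ge> 0"
    using level_weight_nonneg[OF m] pot_le_pot_max by simp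
  then show ?thesis
    unfolding absorption_pot_def using False m lower_levels_nonneg[of "top_level S"] one_le_ell
    by simp
qed (auto simp: absorption_pot_def neutral_pot_nonneg)

lemma absorption_pot_le:
  assumes S: "S \<in> states"
  shows "absorption_pot S \<le> lower_levels (Suc num_levels) + (real ell - 1) * card_V ^ 6"
proof -
  have bound_nonneg: "lower_levels (Suc num_levels) \<ge> 0" by (rule lower_levels_nonneg) simp
  consider "P S" | "\<not> P S" "is_neutral S" | "\<not> P S" "\<not> is_neutral S" by blast
  then show ?thesis
  proof cases
    case 1
    then show ?thesis unfolding absorption_pot_def using bound_nonneg one_le_ell by simp
  next
    case 2
    then show ?thesis
      unfolding absorption_pot_def using bound_nonneg neutral_pot_le_ell[OF S] by simp
  next
    case 3
    let ?m = "top_level S"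
    have m: "lo \<le> ?m" "?m \<le> num_levels"
      using lo_le_top_level[OF S 3] top_level_present[OF S] by auto
    have "level_weight ?m * (pot_max - pot (level_types ?m) S) + lower_levels ?m
        \<le> lower_levels (Suc ?m)"
      using top_term_le_lower_levels[OF m] .
    also have "\<dots> \<le> lower_levels (Suc num_levels)" using m by (intro lower_levels_mono) auto
    finally show ?thesis unfolding absorption_pot_def using 3 by simp
  qed
qed

lemma absorption_pot_after_step_le:
  assumes S: "S \<in> states" and live: "\<not> P S" "\<not> is_neutral S" and v: "v \<in> V"
  defines "m \<equiv> top_level S"
  shows "absorption_pot (S(w := S v))
    \<le> level_weight m * (pot_max - pot (level_types m) (S(w := S v)))
    + (lower_levels m + (real ell - 1) * card_V ^ 6)"
proof -
  let ?S = "S(w := S v)"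
  let ?top = "\<lambda>T. level_weight m * (pot_max - pot (level_types m) T)"
  let ?rest = "lower_levels m + (real ell - 1) * card_V ^ 6"
  have S': "?S \<in> states" using upd_in_states[OF S v] .
  have m: "lo \<le> m" "m \<le> num_levels"
    using lo_le_top_level[OF S live] top_level_present[OF S] m_def by auto
  have top_nonneg: "?top T \<ge> 0" for T
    using level_weight_nonneg[of m] m two_le_lo pot_le_pot_max by simp
  have rest_nonneg: "?rest \<ge> 0" using lower_levels_nonneg[of m] m one_le_ell by simp
  consider "P ?S" | "\<not> P ?S" "is_neutral ?S" | "\<not> P ?S" "\<not> is_neutral ?S" "top_level ?S = m"
    | "\<not> P ?S" "\<not> is_neutral ?S" "top_level ?S < m"
    using top_level_upd_le[OF S v, of w] unfolding m_def by linarith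
  then show ?thesis
  proof cases
    case 1
    then show ?thesis unfolding absorption_pot_def using top_nonneg[of ?S] rest_nonneg by simp
  next
    case 2
    then have "neutral_pot ?S \<le> ?rest"
      using neutral_pot_le_ell[OF S' 2] lower_levels_nonneg[of m] m by simp
    then show ?thesis unfolding absorption_pot_def using 2 top_nonneg[of ?S] by simp
  next
    case 3
    then show ?thesis unfolding absorption_pot_def by simp
  next
    case 4
    let ?m' = "top_level ?S"
    have "lo \<le> ?m'" using lo_le_top_level[OF S' 4(1,2)] .
    then have "absorption_pot ?S \<le> lower_levels (Suc ?m') + (real ell - 1) * card_V ^ 6"
      using top_term_le_lower_levels[of ?m'] 4 m unfolding absorption_pot_def by simp
    also have "\<dots> \<le> ?rest" using 4 m by (simp add: lower_levels_mono)
    also have "\<dots> \<le> ?top ?S + ?rest" using top_nonneg[of ?S] by simp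
    finally show ?thesis .
  qed
qed

lemma absorption_pot_drift:
  assumes S: "S \<in> states" and live: "\<not> P S"
  shows "measure_pmf.expectation (moran_step V E f S) absorption_pot \<le> absorption_pot S - 1"
proof (cases "is_neutral S")
  case True
  obtain v1 w1 where vw: "v1 \<in> V" "w1 \<in> V" "S v1 \<noteq> S w1" using not_monochromatic[OF S live] by blast
  have "edge_avg S (\<lambda>v w. absorption_pot (S(w := S v)))
      \<le> edge_avg S (\<lambda>v w. neutral_pot (S(w := S v)))"
    using is_neutral_upd[OF S _ True] neutral_pot_nonneg
    by (intro edge_avg_mono[OF S]) (simp add: absorption_pot_def)
  also have "\<dots> \<le> neutral_pot S - 1"
    using neutral_pot_drift[OF S _ vw] True unfolding expectation_moran_step[OF S] is_neutral_def
    by blast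
  finally show ?thesis
    unfolding expectation_moran_step[OF S] absorption_pot_def using live True by simp
next
  case False
  let ?m = "top_level S"
  let ?A = "level_types ?m"
  let ?rest = "lower_levels ?m + (real ell - 1) * card_V ^ 6"
  have "edge_avg S (\<lambda>v w. absorption_pot (S(w := S v)))
      \<le> edge_avg S (\<lambda>v w. level_weight ?m * (pot_max - pot ?A (S(w := S v))) + ?rest)"
    using absorption_pot_after_step_le[OF S live False] edge_in_V
    by (intro edge_avg_mono[OF S]) blast
  also have "\<dots> = level_weight ?m * (pot_max - measure_pmf.expectation (moran_step V E f S) (pot ?A))
      + ?rest"
    unfolding expectation_moran_step[OF S] edge_avg_add edge_avg_cmult edge_avg_diff
      edge_avg_const[OF S] ..
  also have "\<dots> = absorption_pot S - level_weight ?m * pot_drift ?A S"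
    unfolding expectation_pot[OF S] absorption_pot_def using live False by (simp add: algebra_simps)
  also have "\<dots> \<le> absorption_pot S - 1"
    using level_weight_pot_drift[OF S False] by simp
  finally show ?thesis unfolding expectation_moran_step[OF S] .
qed

lemma lower_levels_le_fit_sum: "lower_levels (Suc num_levels) \<le> fit_sum f \<tau> (card V) lo"
  unfolding lower_levels_def fit_sum_def atLeastLessThanSuc_atLeastAtMost
proof (rule sum_mono)
  fix i assume i: "i \<in> {lo..num_levels}"
  let ?q = "level i / (level i - level (i - 1))"
  have q: "?q \<ge> 0" using level_gap[of i] i two_le_lo by auto
  have "level_weight i * pot_max \<le> level_weight i * card_V"
    using level_weight_nonneg[of i] i two_le_lo pot_max_le_card_V by (intro mult_left_mono) auto
  also have "\<dots> = ?q * card_V ^ 3 * card_V" unfolding level_weight_def ..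
  also have "\<dots> \<le> ?q * card_V ^ 3 * (card_V + 1)"
    using q by (intro mult_left_mono mult_nonneg_nonneg) auto
  also have "\<dots> = ?q * (card_V + 1) * card_V ^ 3" by (simp add: ac_simps)
  finally show "level_weight i * pot_max \<le> ?q * (card_V + 1) * card_V ^ 3" .
qed

lemma moran_exp_hit_le:
  assumes "M0 \<in> states"
  shows "moran_exp_hit V E f M0 P \<le> ennreal ((real ell - 1) * card_V ^ 6 + fit_sum f \<tau> (card V) lo)"
proof -
  have "moran_exp_hit V E f M0 P \<le> ennreal (absorption_pot M0)"
    unfolding moran_exp_hit_def moran_traj_eq_markov_traj
    by (rule additive_drift[OF assms])
      (auto simp: moran_step_closed absorption_pot_nonneg absorption_pot_drift)
  also have "\<dots> \<le> ennreal ((real ell - 1) * card_V ^ 6 + fit_sum f \<tau> (card V) lo)"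
    using absorption_pot_le[OF assms] lower_levels_le_fit_sum by (intro ennreal_leI) linarith
  finally show ?thesis .
qed

end

context moran_graph
begin

lemma A_exp_le:
  assumes M0: "M0 \<in> states"
  shows "A_exp V E \<tau> f M0
    \<le> ennreal ((real (maxmult f \<tau>) - 1) * card_V ^ 6 + fit_sum f \<tau> (card V) 2)"
proof -
  have le_maxmult: "fit_mult f \<tau> i \<le> maxmult f \<tau>" if "i \<in> {1..num_levels}" for i
    unfolding maxmult_def using that by (intro Max_ge) auto
  obtain x where x: "x \<in> V" using two_le_card_V by fastforce
  have other: "\<exists>w\<in>V. S w \<noteq> S x" if "S \<in> states" "\<not> absorbed_total V \<tau> S" for S
    using that x unfolding states_def absorbed_total_def by blast
  have "M0 x \<in> \<tau>" using M0 x unfolding states_def by auto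
  then obtain i where "i \<in> {1..num_levels}" "fit (M0 x) = level i" by (rule fit_eq_level)
  then have one_le: "1 \<le> maxmult f \<tau>"
    using one_le_fit_mult[OF \<open>M0 x \<in> \<tau>\<close>] le_maxmult by (meson order_trans)
  have two_le: "2 \<le> maxmult f \<tau>"
    if S: "S \<in> states" "\<not> absorbed_total V \<tau> S" "is_neutral S" for S
  proof -
    obtain w where w: "w \<in> V" "S w \<noteq> S x" using other[OF S(1,2)] by blast
    have "2 \<le> fit_mult f \<tau> (top_level S)"
      using S w x two_le_fit_mult[of "S w" "S x" "top_level S"] unfolding is_neutral_def states_def
      by auto
    then show ?thesis using le_maxmult top_level_present[OF S(1)] by fastforce
  qed
  interpret moran_absorption V E \<tau> f "absorbed_total V \<tau>" 2 "maxmult f \<tau>"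
    by (intro moran_absorption.intro moran_graph_axioms moran_absorption_axioms.intro)
      (use one_le two_le other x two_le_top_level in blast)+
  show ?thesis unfolding A_exp_def using moran_exp_hit_le[OF M0] by simp
qed

lemma A_type_exp_le:
  assumes M0: "M0 \<in> states" and \<beta>: "\<beta> \<in> \<tau>" "fit \<beta> = level j" and lo: "2 \<le> lo"
    and lo_le: "\<And>S. S \<in> states \<Longrightarrow> \<not> absorbed_type V \<beta> S \<Longrightarrow> \<not> is_neutral S \<Longrightarrow> lo \<le> top_level S"
  shows "A_type_exp V E f M0 \<beta>
    \<le> ennreal ((real (fit_mult f \<tau> j) - 1) * card_V ^ 6 + fit_sum f \<tau> (card V) lo)"
proof -
  have two_le: "2 \<le> fit_mult f \<tau> j"
    if S: "S \<in> states" "\<not> absorbed_type V \<beta> S" "is_neutral S" for S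
  proof -
    obtain v w where vw: "v \<in> V" "w \<in> V" "S v = \<beta>" "S w \<noteq> \<beta>"
      using S(2) unfolding absorbed_type_def by blast
    then have "fit (S w) = level j" "S w \<in> \<tau>"
      using S(1,3) \<beta>(2) unfolding is_neutral_def states_def by auto
    then show ?thesis using two_le_fit_mult[of \<beta> "S w" j] \<beta> vw by auto
  qed
  interpret moran_absorption V E \<tau> f "absorbed_type V \<beta>" lo "fit_mult f \<tau> j"
    by (intro moran_absorption.intro moran_graph_axioms moran_absorption_axioms.intro)
      (use lo lo_le two_le one_le_fit_mult[OF \<beta>] in \<open>auto simp: absorbed_type_def\<close>)
  show ?thesis unfolding A_type_exp_def using moran_exp_hit_le[OF M0] by simp
qed

lemma A_type_exp_le_upper:
  assumes M0: "M0 \<in> states" and j: "j \<in> {2..num_levels}" and \<beta>: "\<beta> \<in> \<tau>" "fit \<beta> = level j"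
  shows "A_type_exp V E f M0 \<beta>
    \<le> ennreal ((real (fit_mult f \<tau> j) - 1) * card_V ^ 6 + fit_sum f \<tau> (card V) j)"
proof (rule A_type_exp_le[OF M0 \<beta>])
  fix S assume S: "S \<in> states" "\<not> absorbed_type V \<beta> S"
  then obtain v where "v \<in> V" "S v = \<beta>" unfolding absorbed_type_def by blast
  then have "j \<in> levels_present S" using level_present \<beta> j by auto
  then show "j \<le> top_level S" by (rule le_top_level)
qed (use j in auto)

lemma A_type_exp_le_lowest:
  assumes M0: "M0 \<in> states" and \<beta>: "\<beta> \<in> \<tau>" "fit \<beta> = level 1"
  shows "A_type_exp V E f M0 \<beta>
    \<le> ennreal ((real (fit_mult f \<tau> 1) - 1) * card_V ^ 6 + fit_sum f \<tau> (card V) 2)"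
  using A_type_exp_le[OF M0 \<beta>] two_le_top_level by blast

end

theorem theorem18:
  fixes V :: "'v set" and E :: "'v \<Rightarrow> 'v \<Rightarrow> bool" and \<tau> :: "'t set"
    and f :: "'t \<Rightarrow> rat" and M0 :: "'v \<Rightarrow> 't" and n :: nat
  assumes "connected_graph V E"
    and "n = card V"
    and "card \<tau> > 1"
    and "\<forall>x\<in>\<tau>. f x \<ge> 1"
    and "M0 \<in> Omega0 V \<tau>"
  shows "A_exp V E \<tau> f M0 \<le> ennreal ((real (maxmult f \<tau>) - 1) * real n ^ 6 + fit_sum f \<tau> n 2)
    \<and> (\<forall>j\<in>{2..nfit f \<tau>}. \<forall>\<beta>\<in>\<tau>. real_of_rat (f \<beta>) = fitv f \<tau> j \<longrightarrow>
           A_type_exp V E f M0 \<beta> \<le> ennreal ((real (fit_mult f \<tau> j) - 1) * real n ^ 6 + fit_sum f \<tau> n j))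
    \<and> (\<forall>\<beta>\<in>\<tau>. real_of_rat (f \<beta>) = fitv f \<tau> 1 \<longrightarrow>
           A_type_exp V E f M0 \<beta> \<le> ennreal ((real (fit_mult f \<tau> 1) - 1) * real n ^ 6 + fit_sum f \<tau> n 2))"
proof -
  have finite_V: "finite V" using assms(1) by (simp add: connected_graph_def simple_graph_def)
  have M0_onto: "M0 ` V = \<tau>" using assms(5) by (simp add: Omega0_def)
  have "2 \<le> card V" using card_image_le[OF finite_V, of M0] M0_onto assms(3) by simp
  moreover have "finite \<tau>" using M0_onto finite_V by blast
  ultimately interpret moran_graph V E \<tau> f
    using assms(1,4) by unfold_locales
  have "M0 \<in> states" using M0_onto unfolding states_def by blast
  then show ?thesis
    unfolding assms(2) using A_exp_le A_type_exp_le_upper A_type_exp_le_lowest by blast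
qed

end
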